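(* Assume $\mathfrak{r}=2^{\aleph_0}$. Then there is a uniform matroid $U$ on the ground set $\mathbb{N}$ such that the matroid family $(U,U)$ consisting of two copies of $U$ admits a packing and a covering, but does not admit a partitioning.
   Context: Matroids here are possibly infinite: a matroid is a pair $(E,\mathcal{I})$ with $\mathcal{I}\subseteq\mathcal{P}(E)$ such that (1) $\emptyset\in\mathcal{I}$; (2) $\mathcal{I}$ is closed under subsets; (3) for all $I,B\in\mathcal{I}$ with $B$ maximal in $\mathcal{I}$ and $I$ not maximal, there is $x\in B\setminus I$ with $I\cup\{x\}\in\mathcal{I}$; (4) for every $X\subseteq E$, every $I\in\mathcal{I}$ with $I\subseteq X$ extends to a maximal element of $\mathcal{I}\cap\mathcal{P}(X)$. Bases are maximal independent sets; circuits minimal dependent sets. A set $X$ spans $e$ if $e\in X$ or there is a circuit $C\ni e$ with $C\setminus\{e\}\subseteq X$; $S$ is spanning if it spans every element of $E$. A matroid is uniform if whenever $I$ is independent, $e\in I$ and $f\in E\setminus I$, then $(I\setminus\{e\})\cup\{f\}$ is independent. For a family $(M_i\colon i\in K)$ of matroids on $E$: a covering is a family $(R_i\colon i\in K)$ with $R_i$ independent in $M_i$ and $\bigcup_i R_i=E$; a packing is a family $(P_i\colon i\in K)$ of pairwise disjoint sets with $P_i$ spanning in $M_i$; a partitioning is a family $(B_i\colon i\in K)$ partitioning $E$ with each $B_i$ a base of $M_i$. The reaping number $\mathfrak{r}$ is the least cardinal such that there is a family $(A_i\colon i<\mathfrak{r})$ of infinite subsets of $\mathbb{N}$ for which no bipartition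 of $\mathbb{N}$ splits every $A_i$ into two infinite pieces. *)

theory Defs
  imports Main
begin

definition maximal_in :: "'a set set \<Rightarrow> 'a set \<Rightarrow> bool" where
  "maximal_in F B \<longleftrightarrow> B \<in> F \<and> (\<forall>J\<in>F. B \<subseteq> J \<longrightarrow> J = B)"

definition matroid :: "'a set \<Rightarrow> 'a set set \<Rightarrow> bool" where
  "matroid E I \<longleftrightarrow>
     I \<subseteq> Pow E \<and>
     {} \<in> I \<and>
     (\<forall>A\<in>I. \<forall>B. B \<subseteq> A \<longrightarrow> B \<in> I) \<and>
     (\<forall>J\<in>I. \<forall>B\<in>I. maximal_in I B \<and> \<not> maximal_in I J \<longrightarrow>
         (\<exists>x\<in>B - J. insert x J \<in> I)) \<and>
     (\<forall>X. X \<subseteq> E \<longrightarrow> (\<forall>J\<in>I. J \<subseteq> X \<longrightarrow>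
         (\<exists>M. J \<subseteq> M \<and> maximal_in (I \<inter> Pow X) M)))"

definition base :: "'a set set \<Rightarrow> 'a set \<Rightarrow> bool" where
  "base I B \<longleftrightarrow> maximal_in I B"

definition circuit :: "'a set \<Rightarrow> 'a set set \<Rightarrow> 'a set \<Rightarrow> bool" where
  "circuit E I C \<longleftrightarrow> C \<subseteq> E \<and> C \<notin> I \<and> (\<forall>D. D \<subset> C \<longrightarrow> D \<in> I)"

definition spans :: "'a set \<Rightarrow> 'a set set \<Rightarrow> 'a set \<Rightarrow> 'a \<Rightarrow> bool" where
  "spans E I X e \<longleftrightarrow> e \<in> X \<or> (\<exists>C. circuit E I C \<and> e \<in> C \<and> C - {e} \<subseteq> X)"

definition spanning :: "'a set \<Rightarrow> 'a set set \<Rightarrow> 'a set \<Rightarrow> bool" where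
  "spanning E I S \<longleftrightarrow> S \<subseteq> E \<and> (\<forall>e\<in>E. spans E I S e)"

definition uniform_matroid :: "'a set \<Rightarrow> 'a set set \<Rightarrow> bool" where
  "uniform_matroid E I \<longleftrightarrow> matroid E I \<and>
     (\<forall>J\<in>I. \<forall>e\<in>J. \<forall>f\<in>E - J. insert f (J - {e}) \<in> I)"

definition has_covering :: "'a set \<Rightarrow> 'k set \<Rightarrow> ('k \<Rightarrow> 'a set set) \<Rightarrow> bool" where
  "has_covering E K M \<longleftrightarrow>
     (\<exists>R. (\<forall>k\<in>K. R k \<in> M k) \<and> (\<Union>k\<in>K. R k) = E)"

definition has_packing :: "'a set \<Rightarrow> 'k set \<Rightarrow> ('k \<Rightarrow> 'a set set) \<Rightarrow> bool" where
  "has_packing E K M \<longleftrightarrow>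
     (\<exists>P. (\<forall>k\<in>K. spanning E (M k) (P k)) \<and>
          (\<forall>k\<in>K. \<forall>l\<in>K. k \<noteq> l \<longrightarrow> P k \<inter> P l = {}))"

definition has_partitioning :: "'a set \<Rightarrow> 'k set \<Rightarrow> ('k \<Rightarrow> 'a set set) \<Rightarrow> bool" where
  "has_partitioning E K M \<longleftrightarrow>
     (\<exists>B. (\<forall>k\<in>K. base (M k) (B k)) \<and>
          (\<forall>k\<in>K. \<forall>l\<in>K. k \<noteq> l \<longrightarrow> B k \<inter> B l = {}) \<and>
          (\<Union>k\<in>K. B k) = E)"

definition splits :: "nat set \<Rightarrow> nat set \<Rightarrow> bool" where
  "splits X A \<longleftrightarrow> infinite (A \<inter> X) \<and> infinite (A - X)"

definition unsplittable_family :: "nat set set \<Rightarrow> bool" where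
  "unsplittable_family F \<longleftrightarrow> (\<forall>A\<in>F. infinite A) \<and> (\<nexists>X. \<forall>A\<in>F. splits X A)"

text \<open>Since ZFC proves r \<le> 2^aleph0
  (e.g. the family of all infinite sets is unsplittable), r = 2^aleph0 means exactly
  that every unsplittable family has cardinality at least that of the power set of nat.\<close>
definition reaping_eq_continuum :: bool where
  "reaping_eq_continuum \<longleftrightarrow>
     (\<forall>F. unsplittable_family F \<longrightarrow> (card_of (UNIV :: nat set set), card_of F) \<in> ordLeq)"

end

theory Submission
  imports Defs
begin

text \<open>
  Call two sets of naturals compatible if they agree at infinitely many points and, when distinct,
  each has infinitely many points outside the other. A seed family is a nonempty family of pairwise
  compatible sets such that for all \<open>J \<subseteq> X\<close> with \<open>X - J\<close> infinite some seed lies almost below \<open>J\<close>,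
  almost above \<open>X\<close>, or almost between them. Declare as bases all sets obtained from a seed by
  finitely many exchanges (removing and adding equally many points). Since seeds are far apart, the
  bases form an antichain closed under single exchanges, so their subsets form a uniform matroid;
  the nesting condition gives the maximality axiom for infinite sets. Because seeds agree
  infinitely often, a base and its complement are never both bases, so two copies of the matroid
  admit no partitioning. If the residue classes modulo 5 given by \<open>{0,1,2}\<close>, \<open>{2,3,4}\<close>, \<open>{0,3}\<close>,
  \<open>{1,4}\<close> are seeds, the first two cover \<open>\<nat>\<close> and the last two are disjoint bases, giving a
  covering and a packing.

  The seed family is built by recursion along a well-order of all pairs \<open>(J, X)\<close> whose proper
  initial segments have size below the continuum. At each stage fewer than continuum many seeds
  exist, so, the reaping number being the continuum, some \<open>Z\<close> splits every infinite
  \<open>(X - J) \<inter> S\<close> and \<open>(X - J) - S\<close>; then \<open>J \<union> (Z \<inter> (X - J))\<close> lies between \<open>J\<close> and \<open>X\<close> and is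
  compatible with all earlier seeds.
\<close>

section \<open>Finite exchanges of a set\<close>

definition finite_exchange :: "'a set \<Rightarrow> 'a set \<Rightarrow> bool" where
  "finite_exchange S B \<longleftrightarrow> finite (B - S) \<and> finite (S - B) \<and> card (B - S) = card (S - B)"

definition fits_exchange :: "'a set \<Rightarrow> 'a set \<Rightarrow> bool" where
  "fits_exchange S J \<longleftrightarrow> finite (J - S) \<and> (infinite (S - J) \<or> card (J - S) \<le> card (S - J))"

lemma finite_exchange_refl: "finite_exchange S S"
  by (simp add: finite_exchange_def)

lemma finite_exchange_Compl_iff: "finite_exchange (- S) (- B) \<longleftrightarrow> finite_exchange S B"
  by (auto simp: finite_exchange_def Diff_eq Int_commute)

lemma fits_exchange_subset:
  assumes "J \<subseteq> B" "finite_exchange S B"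
  shows "fits_exchange S J"
proof -
  have fin: "finite (B - S)" "finite (S - B)" and eq: "card (B - S) = card (S - B)"
    using assms(2) by (auto simp: finite_exchange_def)
  have "card (J - S) \<le> card (S - J)" if "finite (S - J)"
  proof -
    have "card (J - S) \<le> card (B - S)" using fin assms(1) by (intro card_mono) auto
    also have "\<dots> \<le> card (S - J)" using eq that assms(1) by (metis Diff_mono card_mono order_refl)
    finally show ?thesis .
  qed
  moreover have "finite (J - S)" using fin(1) assms(1) by (meson Diff_mono finite_subset order_refl)
  ultimately show ?thesis by (auto simp: fits_exchange_def)
qed

lemma card_Diff_eq_iff:
  assumes "finite X" "finite Y"
  shows "card (X - Y) = card (Y - X) \<longleftrightarrow> card X = card Y"
proof -
  have "card X = card (X - Y) + card (X \<inter> Y)" "card Y = card (Y - X) + card (X \<inter> Y)"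
    using assms by (metis Int_commute add.commute card_Int_Diff)+
  then show ?thesis by linarith
qed

lemma finite_exchange_iff_window:
  assumes "finite F" "B - S \<subseteq> F" "S - B \<subseteq> F"
  shows "finite_exchange S B \<longleftrightarrow> card (B \<inter> F) = card (S \<inter> F)"
proof -
  have "B - S = (B \<inter> F) - (S \<inter> F)" "S - B = (S \<inter> F) - (B \<inter> F)" using assms by auto
  then show ?thesis using assms(1) card_Diff_eq_iff[of "B \<inter> F" "S \<inter> F"]
    by (simp add: finite_exchange_def)
qed

lemma finite_exchange_swap:
  assumes "finite_exchange S B" "e \<in> B" "f \<notin> B"
  shows "finite_exchange S (insert f (B - {e}))"
proof -
  define F where "F = (B - S) \<union> (S - B) \<union> {e, f}"
  have "finite F" using assms(1) by (simp add: F_def finite_exchange_def)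
  have "insert f (B - {e}) \<inter> F = insert f (B \<inter> F - {e})" "e \<in> B \<inter> F" "f \<notin> B \<inter> F"
    using assms(2,3) by (auto simp: F_def)
  then have "card (insert f (B - {e}) \<inter> F) = card (B \<inter> F)"
    using \<open>finite F\<close> by (metis card_Suc_Diff1 card_insert_disjoint finite_Diff finite_Int DiffE)
  moreover have "card (B \<inter> F) = card (S \<inter> F)"
    using finite_exchange_iff_window[of F B S] \<open>finite F\<close> assms(1) unfolding F_def by blast
  ultimately show ?thesis
    using finite_exchange_iff_window[of F "insert f (B - {e})" S] \<open>finite F\<close> by (auto simp: F_def)
qed

lemma finite_exchange_antichain:
  assumes "finite_exchange S B" "finite_exchange S B'" "B \<subseteq> B'"
  shows "B = B'"
proof -
  define F where "F = (B - S) \<union> (S - B) \<union> (B' - S) \<union> (S - B')"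
  have "finite F" using assms(1,2) by (simp add: F_def finite_exchange_def)
  have "B - S \<subseteq> F" "S - B \<subseteq> F" "B' - S \<subseteq> F" "S - B' \<subseteq> F" by (auto simp: F_def)
  then have "card (B \<inter> F) = card (B' \<inter> F)"
    using finite_exchange_iff_window \<open>finite F\<close> assms(1,2) by metis
  then have "B \<inter> F = B' \<inter> F"
    using \<open>finite F\<close> assms(3) by (intro card_subset_eq) auto
  moreover have "B' - B \<subseteq> F" by (auto simp: F_def)
  ultimately show ?thesis using assms(3) by blast
qed

lemma exists_card_between:
  assumes "finite R" "R \<subseteq> U" "card R \<le> n" "infinite U \<or> n \<le> card U"
  shows "\<exists>T. R \<subseteq> T \<and> T \<subseteq> U \<and> finite T \<and> card T = n"
proof -
  have "infinite (U - R) \<or> n - card R \<le> card (U - R)"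
    using assms by (auto simp: card_Diff_subset)
  then obtain T' where T': "T' \<subseteq> U - R" "finite T'" "card T' = n - card R"
    by (metis infinite_arbitrarily_large obtain_subset_with_card_n)
  then have "card (R \<union> T') = n" using assms(1,3) by (subst card_Un_disjoint) auto
  then show ?thesis using T' assms(1,2) by (intro exI[of _ "R \<union> T'"]) auto
qed

lemma exists_exchange_between_if_card_le:
  assumes "J \<subseteq> X" "fits_exchange S J" "finite (S - X)" "card (S - X) \<le> card (J - S)"
  shows "\<exists>B. finite_exchange S B \<and> J \<subseteq> B \<and> B \<subseteq> X"
proof -
  have "infinite (S - J) \<or> card (J - S) \<le> card (S - J)" "finite (J - S)"
    using assms(2) by (auto simp: fits_exchange_def)
  then obtain T where T: "S - X \<subseteq> T" "T \<subseteq> S - J" "finite T" "card T = card (J - S)"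
    using exists_card_between[of "S - X" "S - J" "card (J - S)"] assms by blast
  define B where "B = (S - T) \<union> (J - S)"
  have "B - S = J - S" "S - B = T" using T(2) by (auto simp: B_def)
  then have "finite_exchange S B" using T \<open>finite (J - S)\<close> by (simp add: finite_exchange_def)
  moreover have "J \<subseteq> B" "B \<subseteq> X" using T(1,2) assms(1) by (auto simp: B_def)
  ultimately show ?thesis by blast
qed

lemma exists_exchange_between:
  assumes "J \<subseteq> X" "fits_exchange S J" "fits_exchange (- S) (- X)"
  shows "\<exists>B. finite_exchange S B \<and> J \<subseteq> B \<and> B \<subseteq> X"
proof (cases "card (S - X) \<le> card (J - S)")
  case True
  moreover have "finite (S - X)" using assms(3) by (simp add: fits_exchange_def Diff_eq Int_commute)
  ultimately show ?thesis using exists_exchange_between_if_card_le assms(1,2) by blast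
next
  case False
  \<comment> \<open>then the first case applies to the complements\<close>
  have "fits_exchange (- S) (- X)" "finite (- S - - J)" "card (- S - - J) \<le> card (- X - - S)"
    using False assms(2,3) by (auto simp: fits_exchange_def Diff_eq Int_commute)
  then obtain B where "finite_exchange (- S) B" "- X \<subseteq> B" "B \<subseteq> - J"
    using exists_exchange_between_if_card_le[of "- X" "- J" "- S"] assms(1) by blast
  then show ?thesis
    using finite_exchange_Compl_iff[of S "- B"] by (intro exI[of _ "- B"]) auto
qed

lemma fits_exchange_iff: "fits_exchange S J \<longleftrightarrow> (\<exists>B. finite_exchange S B \<and> J \<subseteq> B)"
  using exists_exchange_between[of J UNIV S] fits_exchange_subset
  by (auto simp: fits_exchange_def)

lemma fits_exchange_Compl_if_not_fits:
  assumes "finite (S - X)" "\<not> fits_exchange S X"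
  shows "fits_exchange (- S) (- X)"
  using assms by (auto simp: fits_exchange_def Diff_eq Int_commute)

section \<open>The uniform matroid of a seed family\<close>

definition compatible :: "'a set \<Rightarrow> 'a set \<Rightarrow> bool" where
  "compatible S S' \<longleftrightarrow> infinite {x. x \<in> S \<longleftrightarrow> x \<in> S'} \<and>
     (S \<noteq> S' \<longrightarrow> infinite (S - S') \<and> infinite (S' - S))"

definition almost_nested :: "'a set \<Rightarrow> 'a set \<Rightarrow> 'a set \<Rightarrow> bool" where
  "almost_nested J X S \<longleftrightarrow> finite (S - J) \<or> finite (X - S) \<or> (finite (J - S) \<and> finite (S - X))"

lemma compatible_sym:
  assumes "compatible S S'"
  shows "compatible S' S"
proof -
  have "{x. x \<in> S' \<longleftrightarrow> x \<in> S} = {x. x \<in> S \<longleftrightarrow> x \<in> S'}" by blast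
  then show ?thesis using assms by (auto simp: compatible_def)
qed

lemma compatible_refl: "infinite (UNIV :: 'a set) \<Longrightarrow> compatible (S :: 'a set) S"
  by (simp add: compatible_def)

locale seed_family =
  fixes seeds :: "'a set set"
  assumes seeds_nonempty: "seeds \<noteq> {}"
    and seeds_compatible: "\<And>S S'. S \<in> seeds \<Longrightarrow> S' \<in> seeds \<Longrightarrow> compatible S S'"
    and seeds_almost_nested:
      "\<And>J X. J \<subseteq> X \<Longrightarrow> infinite (X - J) \<Longrightarrow> \<exists>S\<in>seeds. almost_nested J X S"
begin

definition bases :: "'a set set" where
  "bases = {B. \<exists>S\<in>seeds. finite_exchange S B}"

definition indep :: "'a set set" where
  "indep = {J. \<exists>B\<in>bases. J \<subseteq> B}"

lemma seed_in_bases: "S \<in> seeds \<Longrightarrow> S \<in> bases"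
  using finite_exchange_refl by (auto simp: bases_def)

lemma indep_iff_fits_exchange: "J \<in> indep \<longleftrightarrow> (\<exists>S\<in>seeds. fits_exchange S J)"
  by (auto simp: indep_def bases_def fits_exchange_iff)

lemma seed_eq_if_almost_equal:
  assumes "S \<in> seeds" "S' \<in> seeds" "finite (S - S')"
  shows "S = S'"
  using seeds_compatible[OF assms(1,2)] assms(3) by (auto simp: compatible_def)

lemma bases_antichain:
  assumes "B \<in> bases" "B' \<in> bases" "B \<subseteq> B'"
  shows "B = B'"
proof -
  obtain S S' where S: "S \<in> seeds" "finite_exchange S B" and S': "S' \<in> seeds" "finite_exchange S' B'"
    using assms by (auto simp: bases_def)
  have "S - S' \<subseteq> (S - B) \<union> (B' - S')" using assms(3) by auto
  moreover have "finite (S - B)" "finite (B' - S')" using S S' by (simp_all add: finite_exchange_def)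
  ultimately have "S = S'" using S S' seed_eq_if_almost_equal by (meson finite_Un finite_subset)
  then show ?thesis using finite_exchange_antichain S S' assms(3) by blast
qed

lemma maximal_in_indep_iff: "maximal_in indep B \<longleftrightarrow> B \<in> bases"
proof
  assume max: "maximal_in indep B"
  then obtain B' where "B' \<in> bases" "B \<subseteq> B'" by (auto simp: maximal_in_def indep_def)
  moreover then have "B' \<in> indep" by (auto simp: indep_def)
  ultimately show "B \<in> bases" using max by (metis maximal_in_def)
next
  assume "B \<in> bases"
  then show "maximal_in indep B"
    unfolding maximal_in_def indep_def using bases_antichain by blast
qed

lemma swap_in_bases:
  assumes "B \<in> bases" "e \<in> B" "f \<notin> B"
  shows "insert f (B - {e}) \<in> bases"
proof -
  obtain S where "S \<in> seeds" "finite_exchange S B" using assms(1) by (auto simp: bases_def)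
  then show ?thesis using finite_exchange_swap[OF _ assms(2,3)] by (auto simp: bases_def)
qed

lemma swap_in_indep:
  assumes "J \<in> indep" "e \<in> J"
  shows "insert f (J - {e}) \<in> indep"
proof -
  obtain B where B: "B \<in> bases" "J \<subseteq> B" using assms(1) by (auto simp: indep_def)
  show ?thesis
  proof (cases "f \<in> B")
    case True
    then have "insert f (J - {e}) \<subseteq> B" using B(2) by blast
    then show ?thesis using B(1) unfolding indep_def by blast
  next
    case False
    then have "insert f (B - {e}) \<in> bases" using swap_in_bases B assms(2) by blast
    moreover have "insert f (J - {e}) \<subseteq> insert f (B - {e})" using B(2) by blast
    ultimately show ?thesis unfolding indep_def by blast
  qed
qed

lemma fits_exchange_seed_if_indep:
  assumes "J \<in> indep" "S \<in> seeds" "finite (J - S)"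
  shows "fits_exchange S J"
proof (cases "finite (S - J)")
  case True
  obtain S' where "S' \<in> seeds" "fits_exchange S' J"
    using assms(1) indep_iff_fits_exchange by blast
  moreover have "S - S' \<subseteq> (S - J) \<union> (J - S')" by auto
  moreover have "finite (J - S')" using \<open>fits_exchange S' J\<close> by (simp add: fits_exchange_def)
  ultimately have "S = S'"
    using True assms(2) seed_eq_if_almost_equal by (meson finite_Un finite_subset)
  then show ?thesis using \<open>fits_exchange S' J\<close> by simp
qed (use assms(3) in \<open>simp add: fits_exchange_def\<close>)

lemma seed_between_if_not_indep:
  assumes "J \<in> indep" "J \<subseteq> X" "X \<notin> indep"
  shows "\<exists>S\<in>seeds. finite (J - S) \<and> finite (S - X)"
proof -
  obtain S0 where S0: "S0 \<in> seeds" "fits_exchange S0 J"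
    using assms(1) indep_iff_fits_exchange by blast
  then have "finite (J - S0)" by (simp add: fits_exchange_def)
  have not_fits: "\<not> fits_exchange S X" if "S \<in> seeds" for S
    using assms(3) that indep_iff_fits_exchange by blast
  show ?thesis
  proof (cases "finite (S0 - X)")
    case False
    then have "infinite (X - S0)" using not_fits[OF S0(1)] by (auto simp: fits_exchange_def)
    moreover have "X - S0 \<subseteq> (X - J) \<union> (J - S0)" by auto
    ultimately have "infinite (X - J)" using \<open>finite (J - S0)\<close> by (meson finite_Un finite_subset)
    then obtain S where S: "S \<in> seeds" "almost_nested J X S"
      using seeds_almost_nested assms(2) by blast
    consider "finite (S - J)" | "finite (X - S)" | "finite (J - S)" "finite (S - X)"
      using S(2) by (auto simp: almost_nested_def)
    then show ?thesis
    proof cases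
      case 1
      moreover have "S - S0 \<subseteq> (S - J) \<union> (J - S0)" by auto
      ultimately have "S = S0"
        using S(1) S0(1) \<open>finite (J - S0)\<close> seed_eq_if_almost_equal by (meson finite_Un finite_subset)
      moreover have "S - X \<subseteq> S - J" using assms(2) by auto
      ultimately show ?thesis using 1 S(1) \<open>finite (J - S0)\<close> by (meson finite_subset)
    next
      case 2
      moreover have "J - S \<subseteq> X - S" using assms(2) by auto
      moreover have "finite (S - X)" using 2 not_fits[OF S(1)] by (auto simp: fits_exchange_def)
      ultimately show ?thesis using S(1) by (meson finite_subset)
    qed (use S(1) in blast)
  qed (use S0(1) \<open>finite (J - S0)\<close> in blast)
qed

lemma exists_base_between:
  assumes "J \<in> indep" "J \<subseteq> X" "X \<notin> indep"
  shows "\<exists>B\<in>bases. J \<subseteq> B \<and> B \<subseteq> X"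
proof -
  obtain S where S: "S \<in> seeds" "finite (J - S)" "finite (S - X)"
    using seed_between_if_not_indep[OF assms] by blast
  have "fits_exchange S J" using fits_exchange_seed_if_indep[OF assms(1) S(1,2)] .
  moreover have "fits_exchange (- S) (- X)"
    using fits_exchange_Compl_if_not_fits[OF S(3)] assms(3) S(1) indep_iff_fits_exchange by blast
  ultimately obtain B where "finite_exchange S B" "J \<subseteq> B" "B \<subseteq> X"
    using exists_exchange_between[OF assms(2)] by blast
  then show ?thesis using S(1) unfolding bases_def by blast
qed

lemma bases_subset_indep: "bases \<subseteq> indep"
  by (auto simp: indep_def)

lemma indep_subset: "J \<in> indep \<Longrightarrow> I \<subseteq> J \<Longrightarrow> I \<in> indep"
  by (auto simp: indep_def)

lemma indep_augment:
  assumes "J \<in> indep" "\<not> maximal_in indep J" "B \<in> bases"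
  shows "\<exists>x\<in>B - J. insert x J \<in> indep"
proof -
  obtain B' where B': "B' \<in> bases" "J \<subseteq> B'" using assms(1) by (auto simp: indep_def)
  then have "J \<noteq> B'" using assms(2) maximal_in_indep_iff by blast
  then obtain e where e: "e \<in> B'" "e \<notin> J" using B'(2) by blast
  show ?thesis
  proof (cases "B \<subseteq> B'")
    case True
    then have "B = B'" using bases_antichain B'(1) assms(3) by blast
    moreover have "insert e J \<subseteq> B'" using e B'(2) by blast
    ultimately show ?thesis using e assms(3) unfolding indep_def by blast
  next
    case False
    then obtain x where x: "x \<in> B" "x \<notin> B'" by blast
    have "insert x (B' - {e}) \<in> indep" using swap_in_indep[of B' e x] B'(1) e(1) bases_subset_indep by blast
    moreover have "insert x J \<subseteq> insert x (B' - {e})" using B'(2) e(2) by blast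
    ultimately have "insert x J \<in> indep" by (rule indep_subset)
    then show ?thesis using x B'(2) by blast
  qed
qed

lemma matroid_indep: "matroid UNIV indep"
  unfolding matroid_def
proof (intro conjI ballI allI impI)
  show "{} \<in> indep" using seeds_nonempty seed_in_bases by (auto simp: indep_def)
next
  fix J B assume "J \<in> indep" "B \<in> indep" "maximal_in indep B \<and> \<not> maximal_in indep J"
  then show "\<exists>x\<in>B - J. insert x J \<in> indep" using indep_augment maximal_in_indep_iff by blast
next
  fix X J assume "J \<in> indep" "J \<subseteq> X"
  show "\<exists>M. J \<subseteq> M \<and> maximal_in (indep \<inter> Pow X) M"
  proof (cases "X \<in> indep")
    case True
    then show ?thesis using \<open>J \<subseteq> X\<close> by (auto simp: maximal_in_def)
  next
    case False
    then obtain B where "B \<in> bases" "J \<subseteq> B" "B \<subseteq> X"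
      using exists_base_between \<open>J \<in> indep\<close> \<open>J \<subseteq> X\<close> by blast
    moreover then have "maximal_in (indep \<inter> Pow X) B"
      using maximal_in_indep_iff[of B] by (auto simp: maximal_in_def)
    ultimately show ?thesis by blast
  qed
qed (auto simp: indep_def)

lemma uniform_matroid_indep: "uniform_matroid UNIV indep"
  using matroid_indep swap_in_indep by (auto simp: uniform_matroid_def)

lemma circuit_insert_base:
  assumes "B \<in> bases" "e \<notin> B"
  shows "circuit UNIV indep (insert e B)"
  unfolding circuit_def
proof (intro conjI allI impI)
  show "insert e B \<notin> indep"
    using assms maximal_in_indep_iff[of B] unfolding maximal_in_def by blast
next
  fix D assume D: "D \<subset> insert e B"
  show "D \<in> indep"
  proof (cases "e \<in> D")
    case False
    then have "D \<subseteq> B" using D by blast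
    then show ?thesis using assms(1) bases_subset_indep indep_subset by blast
  next
    case True
    then obtain x where "x \<in> B" "x \<notin> D" using D by blast
    then have "insert e (B - {x}) \<in> indep"
      using swap_in_indep[of B x e] assms(1) bases_subset_indep by blast
    moreover have "D \<subseteq> insert e (B - {x})" using D \<open>x \<notin> D\<close> by blast
    ultimately show ?thesis by (rule indep_subset)
  qed
qed simp

lemma spanning_if_contains_base:
  assumes "B \<in> bases" "B \<subseteq> P"
  shows "spanning UNIV indep P"
  unfolding spanning_def spans_def
proof (intro conjI ballI)
  fix e
  show "e \<in> P \<or> (\<exists>C. circuit UNIV indep C \<and> e \<in> C \<and> C - {e} \<subseteq> P)"
    using circuit_insert_base[OF assms(1), of e] assms(2) by blast
qed simp

lemma Compl_base_not_base:
  assumes "B \<in> bases"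
  shows "- B \<notin> bases"
proof
  assume "- B \<in> bases"
  then obtain S S' where S: "S \<in> seeds" "finite_exchange S B"
    and S': "S' \<in> seeds" "finite_exchange S' (- B)"
    using assms by (auto simp: bases_def)
  have "{x. x \<in> S \<longleftrightarrow> x \<in> S'} \<subseteq> (B - S) \<union> (S - B) \<union> (- B - S') \<union> (S' - - B)" by auto
  moreover have "finite ((B - S) \<union> (S - B) \<union> (- B - S') \<union> (S' - - B))"
    using S S' by (simp add: finite_exchange_def)
  ultimately show False
    using seeds_compatible[OF S(1) S'(1)] finite_subset by (auto simp: compatible_def)
qed

lemma has_packing_if_disjoint_bases:
  assumes "B \<in> bases" "B' \<in> bases" "B \<inter> B' = {}"
  shows "has_packing UNIV (UNIV :: bool set) (\<lambda>_. indep)"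
  unfolding has_packing_def
  using assms spanning_if_contains_base by (intro exI[of _ "\<lambda>k. if k then B else B'"]) auto

lemma has_covering_if_covering_bases:
  assumes "B \<in> bases" "B' \<in> bases" "B \<union> B' = UNIV"
  shows "has_covering UNIV (UNIV :: bool set) (\<lambda>_. indep)"
  unfolding has_covering_def
  using assms bases_subset_indep by (intro exI[of _ "\<lambda>k. if k then B else B'"]) (auto simp: UNIV_bool)

lemma not_has_partitioning: "\<not> has_partitioning UNIV (UNIV :: bool set) (\<lambda>_. indep)"
proof
  assume "has_partitioning UNIV (UNIV :: bool set) (\<lambda>_. indep)"
  then obtain B where "B True \<in> bases" "B False \<in> bases" "B True \<inter> B False = {}"
      "B True \<union> B False = UNIV"
    unfolding has_partitioning_def base_def maximal_in_indep_iff by (auto simp: UNIV_bool)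
  moreover from this have "B False = - B True" by blast
  ultimately show False using Compl_base_not_base by metis
qed

end

section \<open>A seed family from the reaping number hypothesis\<close>

unbundle cardinal_syntax

lemma infinite_UNIV_nat_set: "infinite (UNIV :: nat set set)"
  by (metis finite_Pow_iff infinite_UNIV_nat Pow_UNIV)

lemma exists_splitter:
  assumes "reaping_eq_continuum" "|F| <o |UNIV :: nat set set|"
  shows "\<exists>Z. \<forall>A\<in>F. infinite A \<longrightarrow> splits Z A"
proof -
  have "|{A\<in>F. infinite A}| <o |UNIV :: nat set set|"
    using assms(2) card_of_mono1[of "{A\<in>F. infinite A}" F] ordLeq_ordLess_trans by blast
  then have "\<not> unsplittable_family {A\<in>F. infinite A}"
    using assms(1) not_ordLess_ordLeq unfolding reaping_eq_continuum_def by blast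
  then show ?thesis unfolding unsplittable_family_def by blast
qed

lemma infinite_agreement_if_splits:
  fixes D S Z :: "nat set"
  assumes "infinite D"
    and "infinite (D \<inter> S) \<Longrightarrow> splits Z (D \<inter> S)" "infinite (D - S) \<Longrightarrow> splits Z (D - S)"
  shows "infinite {x\<in>D. x \<in> S \<longleftrightarrow> x \<in> Z}"
proof (cases "finite (D \<inter> S)")
  case False
  then have "infinite ((D \<inter> S) \<inter> Z)" using assms(2) by (simp add: splits_def)
  moreover have "(D \<inter> S) \<inter> Z \<subseteq> {x\<in>D. x \<in> S \<longleftrightarrow> x \<in> Z}" by auto
  ultimately show ?thesis using finite_subset by blast
next
  case True
  have "D \<subseteq> (D \<inter> S) \<union> (D - S)" by auto
  then have "infinite (D - S)" using True assms(1) by (meson finite_Un finite_subset)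
  then have "infinite ((D - S) - Z)" using assms(3) by (simp add: splits_def)
  moreover have "(D - S) - Z \<subseteq> {x\<in>D. x \<in> S \<longleftrightarrow> x \<in> Z}" by auto
  ultimately show ?thesis using finite_subset by blast
qed

lemma compatible_if_splits:
  fixes J X S Z :: "nat set"
  defines "D \<equiv> X - J"
  assumes "J \<subseteq> X" "infinite D" "\<not> almost_nested J X S"
    and "infinite (D \<inter> S) \<Longrightarrow> splits Z (D \<inter> S)" "infinite (D - S) \<Longrightarrow> splits Z (D - S)"
  shows "compatible S (J \<union> (Z \<inter> D))"
proof -
  let ?Y = "J \<union> (Z \<inter> D)"
  have far: "infinite (S - J)" "infinite (X - S)" "infinite (J - S) \<or> infinite (S - X)"
    using assms(4) by (auto simp: almost_nested_def)
  have "infinite (?Y - S)"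
  proof (cases "finite (J - S)")
    case True
    have "X - S \<subseteq> (J - S) \<union> (D - S)" by (auto simp: D_def)
    then have "infinite (D - S)" using True far(2) by (meson finite_Un finite_subset)
    then have "infinite ((D - S) \<inter> Z)" using assms(6) by (simp add: splits_def Int_commute)
    moreover have "(D - S) \<inter> Z \<subseteq> ?Y - S" by auto
    ultimately show ?thesis using finite_subset by blast
  qed (auto intro: finite_subset[of "J - S" "?Y - S"])
  moreover have "infinite (S - ?Y)"
  proof (cases "finite (S - X)")
    case True
    have "S - J \<subseteq> (S - X) \<union> (D \<inter> S)" by (auto simp: D_def)
    then have "infinite (D \<inter> S)" using True far(1) by (meson finite_Un finite_subset)
    then have "infinite ((D \<inter> S) - Z)" using assms(5) by (simp add: splits_def)
    moreover have "(D \<inter> S) - Z \<subseteq> S - ?Y" by (auto simp: D_def)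
    ultimately show ?thesis using finite_subset by blast
  next
    case False
    moreover have "S - X \<subseteq> S - ?Y" using assms(2) by (auto simp: D_def)
    ultimately show ?thesis using finite_subset by blast
  qed
  moreover have "{x\<in>D. x \<in> S \<longleftrightarrow> x \<in> Z} \<subseteq> {x. x \<in> S \<longleftrightarrow> x \<in> ?Y}" by (auto simp: D_def)
  then have "infinite {x. x \<in> S \<longleftrightarrow> x \<in> ?Y}"
    using infinite_agreement_if_splits[OF assms(3,5,6)] finite_subset by blast
  ultimately show ?thesis by (simp add: compatible_def)
qed

lemma exists_compatible_extension:
  fixes G :: "nat set set" and J X :: "nat set"
  assumes "reaping_eq_continuum" "|G| <o |UNIV :: nat set set|"
    and "J \<subseteq> X" "infinite (X - J)" "\<forall>S\<in>G. \<not> almost_nested J X S"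
  shows "\<exists>Y. J \<subseteq> Y \<and> Y \<subseteq> X \<and> (\<forall>S\<in>G. compatible S Y)"
proof -
  define D where "D = X - J"
  have "|(\<lambda>S. D \<inter> S) ` G| <o |UNIV :: nat set set|" "|(\<lambda>S. D - S) ` G| <o |UNIV :: nat set set|"
    using assms(2) card_of_image ordLeq_ordLess_trans by blast+
  then have "|(\<lambda>S. D \<inter> S) ` G \<union> (\<lambda>S. D - S) ` G| <o |UNIV :: nat set set|"
    using card_of_Un_ordLess_infinite infinite_UNIV_nat_set by blast
  then obtain Z where "\<forall>A\<in>(\<lambda>S. D \<inter> S) ` G \<union> (\<lambda>S. D - S) ` G. infinite A \<longrightarrow> splits Z A"
    using exists_splitter assms(1) by blast
  then have "compatible S (J \<union> (Z \<inter> D))" if "S \<in> G" for S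
    using compatible_if_splits[OF assms(3)] assms(4,5) that by (simp add: D_def)
  moreover have "J \<subseteq> J \<union> (Z \<inter> D)" "J \<union> (Z \<inter> D) \<subseteq> X" using assms(3) by (auto simp: D_def)
  ultimately show ?thesis by blast
qed

definition mod_class :: "nat \<Rightarrow> nat set \<Rightarrow> nat set" where
  "mod_class m R = {n. n mod m \<in> R}"

lemma infinite_mod_class:
  assumes "k \<in> R" "k < m"
  shows "infinite (mod_class m R)"
proof -
  have "inj (\<lambda>i. m * i + k)" using assms(2) by (auto simp: inj_on_def)
  then have "infinite (range (\<lambda>i. m * i + k))" by (metis finite_imageD infinite_UNIV_nat)
  moreover have "range (\<lambda>i. m * i + k) \<subseteq> mod_class m R" using assms by (auto simp: mod_class_def)
  ultimately show ?thesis using finite_subset by blast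
qed

lemma compatible_mod_class:
  assumes "k \<in> R - R'" "k' \<in> R' - R" "k'' \<in> R \<longleftrightarrow> k'' \<in> R'" "k < m" "k' < m" "k'' < m"
  shows "compatible (mod_class m R) (mod_class m R')"
proof -
  have "{x. x \<in> mod_class m R \<longleftrightarrow> x \<in> mod_class m R'} = mod_class m {i. i \<in> R \<longleftrightarrow> i \<in> R'}"
    "mod_class m R - mod_class m R' = mod_class m (R - R')"
    "mod_class m R' - mod_class m R = mod_class m (R' - R)"
    by (auto simp: mod_class_def)
  then show ?thesis using assms infinite_mod_class by (simp add: compatible_def)
qed

fun unhandled :: "nat set set \<Rightarrow> nat set \<times> nat set \<Rightarrow> bool" where
  "unhandled G (J, X) \<longleftrightarrow> J \<subseteq> X \<and> infinite (X - J) \<and> (\<forall>S\<in>G. \<not> almost_nested J X S)"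

fun admissible :: "nat set set \<Rightarrow> nat set \<times> nat set \<Rightarrow> nat set \<Rightarrow> bool" where
  "admissible G (J, X) Y \<longleftrightarrow> J \<subseteq> Y \<and> Y \<subseteq> X \<and> (\<forall>S\<in>G. compatible S Y)"

definition initial_seeds :: "nat set set" where
  "initial_seeds = {mod_class 5 {0, 1, 2}, mod_class 5 {2, 3, 4}, mod_class 5 {0, 3}, mod_class 5 {1, 4}}"

text \<open>A cardinal well-order: its proper initial segments have fewer elements than the continuum.\<close>

definition seed_order :: "(nat set \<times> nat set) rel" where
  "seed_order = |UNIV :: (nat set \<times> nat set) set|"

definition seed_step :: "(nat set \<times> nat set \<Rightarrow> nat set set) \<Rightarrow> nat set \<times> nat set \<Rightarrow> nat set set" where
  "seed_step f p = (let G = initial_seeds \<union> \<Union>(f ` underS seed_order p) in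
     if unhandled G p then {SOME Y. admissible G p Y} else {})"

definition new_seed :: "nat set \<times> nat set \<Rightarrow> nat set set" where
  "new_seed = wfrec (seed_order - Id) seed_step"

definition seeds_before :: "nat set \<times> nat set \<Rightarrow> nat set set" where
  "seeds_before p = initial_seeds \<union> \<Union>(new_seed ` underS seed_order p)"

definition constructed_seeds :: "nat set set" where
  "constructed_seeds = initial_seeds \<union> \<Union>(range new_seed)"

lemma well_order_seed_order: "Well_order seed_order"
  by (simp add: seed_order_def card_of_Well_order)

lemma Field_seed_order: "Field seed_order = UNIV"
  by (simp add: seed_order_def Field_card_of)

lemma new_seed_eq:
  "new_seed p = (if unhandled (seeds_before p) p then {SOME Y. admissible (seeds_before p) p Y} else {})"
proof -
  have "wf (seed_order - Id)"
    using well_order_seed_order wo_rel.WF unfolding wo_rel_def by blast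
  then have "new_seed p = seed_step (cut new_seed (seed_order - Id) p) p"
    unfolding new_seed_def by (rule wfrec)
  moreover have "cut new_seed (seed_order - Id) p ` underS seed_order p = new_seed ` underS seed_order p"
    by (intro image_cong refl) (auto simp: cut_apply underS_def)
  ultimately show ?thesis by (simp add: seed_step_def seeds_before_def)
qed

lemma seeds_before_small: "|seeds_before p| <o |UNIV :: nat set set|"
proof -
  define c where "c q = (SOME Y. admissible (seeds_before q) q Y)" for q
  have "new_seed q \<subseteq> {c q}" for q using new_seed_eq[of q] by (simp add: c_def)
  then have covered: "seeds_before p \<subseteq> initial_seeds \<union> c ` underS seed_order p"
    unfolding seeds_before_def by blast
  moreover have "|underS seed_order p| <o |UNIV :: nat set set|"
  proof -
    have "|underS seed_order p| <o seed_order"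
      using card_of_underS[of seed_order p] Field_seed_order card_of_Card_order
      unfolding seed_order_def by blast
    moreover have "seed_order =o |UNIV :: nat set set|"
      using card_of_Times_same_infinite[OF infinite_UNIV_nat_set] by (simp add: seed_order_def)
    ultimately show ?thesis using ordLess_ordIso_trans by blast
  qed
  then have "|c ` underS seed_order p| <o |UNIV :: nat set set|"
    using card_of_image ordLeq_ordLess_trans by blast
  moreover have "|initial_seeds| <o |UNIV :: nat set set|"
  proof -
    have "finite initial_seeds" by (simp add: initial_seeds_def)
    then show ?thesis
      using finite_ordLess_infinite[OF card_of_Well_order card_of_Well_order] infinite_UNIV_nat_set
      by (simp add: Field_card_of)
  qed
  ultimately have "|initial_seeds \<union> c ` underS seed_order p| <o |UNIV :: nat set set|"
    using card_of_Un_ordLess_infinite[OF infinite_UNIV_nat_set] by blast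
  then show ?thesis using card_of_mono1[OF covered] ordLeq_ordLess_trans by blast
qed

lemma new_seed_admissible:
  assumes "reaping_eq_continuum" "Y \<in> new_seed p"
  shows "admissible (seeds_before p) p Y"
proof -
  obtain J X where p: "p = (J, X)" by fastforce
  have "unhandled (seeds_before p) p" and Y: "Y = (SOME Y. admissible (seeds_before p) p Y)"
    using assms(2) new_seed_eq[of p] by (auto split: if_splits)
  then have "\<exists>Y. admissible (seeds_before p) p Y"
    using exists_compatible_extension[OF assms(1) seeds_before_small] by (simp add: p)
  then show ?thesis unfolding Y by (rule someI_ex)
qed

lemma initial_seeds_compatible:
  assumes "S \<in> initial_seeds" "S' \<in> initial_seeds"
  shows "compatible S S'"
proof -
  have "compatible (mod_class 5 {0, 1, 2}) (mod_class 5 {2, 3, 4})"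
    by (rule compatible_mod_class[of 0 _ _ 3 2]) simp_all
  moreover have "compatible (mod_class 5 {0, 1, 2}) (mod_class 5 {0, 3})"
    by (rule compatible_mod_class[of 1 _ _ 3 0]) simp_all
  moreover have "compatible (mod_class 5 {0, 1, 2}) (mod_class 5 {1, 4})"
    by (rule compatible_mod_class[of 0 _ _ 4 1]) simp_all
  moreover have "compatible (mod_class 5 {2, 3, 4}) (mod_class 5 {0, 3})"
    by (rule compatible_mod_class[of 2 _ _ 0 3]) simp_all
  moreover have "compatible (mod_class 5 {2, 3, 4}) (mod_class 5 {1, 4})"
    by (rule compatible_mod_class[of 2 _ _ 1 4]) simp_all
  moreover have "compatible (mod_class 5 {0, 3}) (mod_class 5 {1, 4})"
    by (rule compatible_mod_class[of 0 _ _ 1 2]) simp_all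
  ultimately show ?thesis
    using assms compatible_sym compatible_refl[OF infinite_UNIV_nat]
    unfolding initial_seeds_def by auto
qed

lemma constructed_seeds_compatible:
  assumes "reaping_eq_continuum" "S \<in> constructed_seeds" "S' \<in> constructed_seeds"
  shows "compatible S S'"
proof -
  have earlier: "compatible S Y" if "S \<in> seeds_before p" "Y \<in> new_seed p" for S Y p
    using new_seed_admissible[OF assms(1) that(2)] that(1) by (cases p) auto
  have new: "compatible Y Y'" if "Y \<in> new_seed p" "Y' \<in> new_seed q" for Y Y' p q
  proof (cases "p = q")
    case True
    then show ?thesis using that new_seed_eq[of p] compatible_refl[OF infinite_UNIV_nat]
      by (auto split: if_splits)
  next
    case False
    then have "p \<in> underS seed_order q \<or> q \<in> underS seed_order p"
      using well_order_seed_order Field_seed_order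
      by (auto simp: underS_def wo_rel.TOTALS wo_rel_def)
    then show ?thesis
    proof
      assume "p \<in> underS seed_order q"
      then have "Y \<in> seeds_before q" using that(1) by (auto simp: seeds_before_def)
      then show ?thesis using earlier that(2) by blast
    next
      assume "q \<in> underS seed_order p"
      then have "Y' \<in> seeds_before p" using that(2) by (auto simp: seeds_before_def)
      then show ?thesis using earlier that(1) compatible_sym by blast
    qed
  qed
  have "S \<in> seeds_before p" if "S \<in> initial_seeds" for S p
    using that by (simp add: seeds_before_def)
  then show ?thesis
    using assms(2,3) initial_seeds_compatible earlier new compatible_sym
    unfolding constructed_seeds_def by blast
qed

lemma constructed_seeds_almost_nested:
  assumes "reaping_eq_continuum" "J \<subseteq> X" "infinite (X - J)"
  shows "\<exists>S\<in>constructed_seeds. almost_nested J X S"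
proof (cases "unhandled (seeds_before (J, X)) (J, X)")
  case True
  then have "new_seed (J, X) \<noteq> {}" using new_seed_eq[of "(J, X)"] by simp
  then obtain Y where Y: "Y \<in> new_seed (J, X)" by blast
  then have "admissible (seeds_before (J, X)) (J, X) Y" by (rule new_seed_admissible[OF assms(1)])
  then have "J - Y = {}" "Y - X = {}" by auto
  then have "almost_nested J X Y" unfolding almost_nested_def by (metis finite.emptyI)
  then show ?thesis using Y unfolding constructed_seeds_def by blast
next
  case False
  then have "\<not> (\<forall>S\<in>seeds_before (J, X). \<not> almost_nested J X S)"
    using assms(2,3) by simp
  then obtain S where "S \<in> seeds_before (J, X)" "almost_nested J X S" by blast
  moreover have "seeds_before (J, X) \<subseteq> constructed_seeds"
    unfolding seeds_before_def constructed_seeds_def by blast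
  ultimately show ?thesis by blast
qed

lemma seed_family_constructed_seeds:
  assumes "reaping_eq_continuum"
  shows "seed_family constructed_seeds"
proof
  show "constructed_seeds \<noteq> {}" by (simp add: constructed_seeds_def initial_seeds_def)
qed (use constructed_seeds_compatible[OF assms] constructed_seeds_almost_nested[OF assms] in blast)+

theorem theorem5p1:
  assumes "reaping_eq_continuum"
  shows "\<exists>U :: nat set set. uniform_matroid (UNIV :: nat set) U \<and>
           has_packing UNIV (UNIV :: bool set) (\<lambda>_. U) \<and>
           has_covering UNIV (UNIV :: bool set) (\<lambda>_. U) \<and>
           \<not> has_partitioning UNIV (UNIV :: bool set) (\<lambda>_. U)"
proof -
  interpret seed_family constructed_seeds
    using seed_family_constructed_seeds[OF assms] .
  have "initial_seeds \<subseteq> bases" using seed_in_bases unfolding constructed_seeds_def by blast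
  then have seed_bases: "mod_class 5 {0, 1, 2} \<in> bases" "mod_class 5 {2, 3, 4} \<in> bases"
    "mod_class 5 {0, 3} \<in> bases" "mod_class 5 {1, 4} \<in> bases"
    unfolding initial_seeds_def by auto
  have "has_packing UNIV (UNIV :: bool set) (\<lambda>_. indep)"
    by (rule has_packing_if_disjoint_bases[OF seed_bases(3,4)]) (auto simp: mod_class_def)
  moreover have "has_covering UNIV (UNIV :: bool set) (\<lambda>_. indep)"
    by (rule has_covering_if_covering_bases[OF seed_bases(1,2)]) (auto simp: mod_class_def)
  ultimately show ?thesis using uniform_matroid_indep not_has_partitioning by blast
qed

end
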